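(* Let $\rho$ be a geometric Nielsen 1-chain and let $p_0,p_1,\dots,p_m$ ($m\ge1$) be an edge-path in $T_\rho$ with $p_0=p_m$. Then either $p_j=p_k$ for some distinct indices $0\le j,k<m$, or there exists an orientation on this edge-path.
   Context: Setup: $\mathbb F$ finitely generated free, $\Gamma$ finite connected graph with $\pi_1(\Gamma)\cong\mathbb F$, $H\subset\Gamma$ a subgraph, $f$ a homotopy equivalence with $f(H)\subseteq H$ and fixed lift $\tilde f$ to the universal cover $\widetilde\Gamma$ ($\mathbb F$ acting by deck transformations), $\widetilde H$ the preimage of $H$. 1-chains $x=\sum_ex_ee$ (reversing an edge's orientation negates its coefficient), $\mathrm{supp}(x)=\{e:x_e\ne0\}$; $\pi_H^\perp$ sets coefficients on edges of $\widetilde H$ to $0$; $[u,v]$ is the 1-chain of the reduced edge-path from vertex $u$ to vertex $v$ (coefficient $\pm1$ on its edges). A geometric Nielsen 1-chain is $\rho=\pi_H^\perp([u,v])$ with $\tilde f(u)=u,\tilde f(v)=v$ such that (GNC1) for distinct $g_1,g_2\in\mathbb F$, $\mathrm{supp}(g_1\rho)\cap\mathrm{supp}(g_2\rho)$ is empty or a single edge; (GNC2) each edge $e\notin\widetilde H$ lies in $\mathrm{supp}(g\rho)$ for exactly two elements $g_1,g_2$, and is the unique edge of $\mathrm{supp}(g_1\rho)\cap\mathrm{supp}(g_2\rho)$; (GNC3) some non-commuting $g_1,g_2$ have $\mathrm{supp}(\rho)\cap\mathrm{supp}(g_i\rho)\ne\emptyset$. The graph $T_\rho$ has vertex set $\mathbb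 F$ and an edge between distinct $g_1,g_2$ iff $\mathrm{supp}(g_1\rho)\cap\mathrm{supp}(g_2\rho)\ne\emptyset$. An edge-path $p_0,\dots,p_m$ is a sequence of vertices with $p_{j-1},p_j$ adjacent. For a closed edge-path ($p_0=p_m$), take indices mod $m$, let $g_j=p_j$, and let $e_j$ be the unique edge in $\mathrm{supp}(g_{j-1}\rho)\cap\mathrm{supp}(g_j\rho)$; then $e_j,e_{j+1}\in\mathrm{supp}(g_j\rho)$. An orientation on the path is a choice, for each index $j$, of an orientation of $e_j$ (choices for different indices are independent) such that $(g_j\rho)_{e_j}=-(g_j\rho)_{e_{j+1}}$ for all $0\le j<m$. *)

theory Defs
  imports "HOL-Algebra.Group" "HOL-Algebra.Group_Action"
begin

record ('v, 'e) sgraph =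
  ini :: "'e \<Rightarrow> 'v"
  ter :: "'e \<Rightarrow> 'v"
  rv  :: "'e \<Rightarrow> 'e"

definition serre_graph :: "('v, 'e) sgraph \<Rightarrow> bool" where
  "serre_graph X \<equiv> (\<forall>e. rv X (rv X e) = e \<and> rv X e \<noteq> e \<and> ini X (rv X e) = ter X e)"

definition reduced_path :: "('v, 'e) sgraph \<Rightarrow> 'v \<Rightarrow> 'v \<Rightarrow> 'e list \<Rightarrow> bool" where
  "reduced_path X u v es \<equiv>
     (es = [] \<longrightarrow> u = v) \<and>
     (es \<noteq> [] \<longrightarrow> ini X (hd es) = u \<and> ter X (last es) = v \<and>
        (\<forall>i. Suc i < length es \<longrightarrow>
              ter X (es ! i) = ini X (es ! Suc i) \<and> es ! Suc i \<noteq> rv X (es ! i)))"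

definition is_tree :: "('v, 'e) sgraph \<Rightarrow> bool" where
  "is_tree X \<equiv> serre_graph X \<and> (\<forall>u v. \<exists>!es. reduced_path X u v es)"

definition geod :: "('v, 'e) sgraph \<Rightarrow> 'v \<Rightarrow> 'v \<Rightarrow> 'e list" where
  "geod X u v = (THE es. reduced_path X u v es)"

text \<open>1-chains are integer-valued functions on oriented edges with
  x (rev e) = - x e.\<close>
definition path_chain :: "('v, 'e) sgraph \<Rightarrow> 'v \<Rightarrow> 'v \<Rightarrow> 'e \<Rightarrow> int" where
  "path_chain X u v = (\<lambda>e. if e \<in> set (geod X u v) then 1
                            else if rv X e \<in> set (geod X u v) then -1 else 0)"

definition supp :: "('e \<Rightarrow> int) \<Rightarrow> 'e set" where
  "supp x = {e. x e \<noteq> 0}"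

text \<open>A set of oriented edges consists of a single (unoriented) edge.\<close>
definition single_edge :: "('v, 'e) sgraph \<Rightarrow> 'e set \<Rightarrow> bool" where
  "single_edge X S \<equiv> (\<exists>e. S = {e, rv X e})"

definition proj_perp :: "'e set \<Rightarrow> ('e \<Rightarrow> int) \<Rightarrow> 'e \<Rightarrow> int" where
  "proj_perp Ht x = (\<lambda>e. if e \<in> Ht then 0 else x e)"

text \<open>The group G acts on the tree by graph automorphisms, freely on vertices and
  without edge inversions, with finitely many orbits of vertices and of edges
  (i.e. the quotient graph \<Gamma> is finite; it is connected as the tree is).
  Such a G is then a finitely generated free group, \<pi>_1 of the quotient.\<close>
definition deck_action ::
  "('g, 'b) monoid_scheme \<Rightarrow> ('v, 'e) sgraph \<Rightarrow> ('g \<Rightarrow> 'v \<Rightarrow> 'v) \<Rightarrow> ('g \<Rightarrow> 'e \<Rightarrow> 'e) \<Rightarrow> bool" where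
  "deck_action G X act acte \<equiv>
     group G \<and> is_tree X \<and>
     (\<forall>x. act \<one>\<^bsub>G\<^esub> x = x) \<and> (\<forall>e. acte \<one>\<^bsub>G\<^esub> e = e) \<and>
     (\<forall>g\<in>carrier G. \<forall>h\<in>carrier G. \<forall>x. act (g \<otimes>\<^bsub>G\<^esub> h) x = act g (act h x)) \<and>
     (\<forall>g\<in>carrier G. \<forall>h\<in>carrier G. \<forall>e. acte (g \<otimes>\<^bsub>G\<^esub> h) e = acte g (acte h e)) \<and>
     (\<forall>g\<in>carrier G. \<forall>e. ini X (acte g e) = act g (ini X e) \<and>
                        ter X (acte g e) = act g (ter X e) \<and>
                        acte g (rv X e) = rv X (acte g e)) \<and>
     (\<forall>g\<in>carrier G. \<forall>x. act g x = x \<longrightarrow> g = \<one>\<^bsub>G\<^esub>) \<and>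
     (\<forall>g\<in>carrier G. \<forall>e. acte g e \<noteq> rv X e) \<and>
     (\<exists>V0. finite V0 \<and> (\<forall>x. \<exists>g\<in>carrier G. \<exists>y\<in>V0. x = act g y)) \<and>
     (\<exists>E0. finite E0 \<and> (\<forall>e. \<exists>g\<in>carrier G. \<exists>d\<in>E0. e = acte g d))"

text \<open>Preimage \<tilde>H of a subgraph H of \<Gamma>: a G-invariant subgraph of the tree,
  given by a vertex set Hv and an edge set Ht.\<close>
definition lifted_subgraph ::
  "('g, 'b) monoid_scheme \<Rightarrow> ('v, 'e) sgraph \<Rightarrow> ('g \<Rightarrow> 'v \<Rightarrow> 'v) \<Rightarrow> ('g \<Rightarrow> 'e \<Rightarrow> 'e)
   \<Rightarrow> 'v set \<Rightarrow> 'e set \<Rightarrow> bool" where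
  "lifted_subgraph G X act acte Hv Ht \<equiv>
     (\<forall>e\<in>Ht. rv X e \<in> Ht \<and> ini X e \<in> Hv \<and> ter X e \<in> Hv) \<and>
     (\<forall>g\<in>carrier G. \<forall>x\<in>Hv. act g x \<in> Hv) \<and>
     (\<forall>g\<in>carrier G. \<forall>e\<in>Ht. acte g e \<in> Ht)"

text \<open>ftil is (the vertex map of) a lift to the universal cover of a homotopy
  equivalence f of \<Gamma> with f(H) \<subseteq> H: it is twisted-equivariant with respect to
  an automorphism phi of G (the induced map on \<pi>_1), maps \<tilde>H-vertices into \<tilde>H,
  and maps each \<tilde>H-edge to a path in \<tilde>H (the tightened image path lies in \<tilde>H).\<close>
definition lifted_he ::
  "('g, 'b) monoid_scheme \<Rightarrow> ('v, 'e) sgraph \<Rightarrow> ('g \<Rightarrow> 'v \<Rightarrow> 'v)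
   \<Rightarrow> 'v set \<Rightarrow> 'e set \<Rightarrow> ('v \<Rightarrow> 'v) \<Rightarrow> bool" where
  "lifted_he G X act Hv Ht ftil \<equiv>
     (\<exists>phi. phi \<in> iso G G \<and> (\<forall>g\<in>carrier G. \<forall>x. ftil (act g x) = act (phi g) (ftil x))) \<and>
     (\<forall>x\<in>Hv. ftil x \<in> Hv) \<and>
     (\<forall>e\<in>Ht. set (geod X (ftil (ini X e)) (ftil (ter X e))) \<subseteq> Ht)"

definition translate ::
  "('g, 'b) monoid_scheme \<Rightarrow> ('g \<Rightarrow> 'e \<Rightarrow> 'e) \<Rightarrow> 'g \<Rightarrow> ('e \<Rightarrow> int) \<Rightarrow> 'e \<Rightarrow> int" where
  "translate G acte g x = (\<lambda>e. x (acte (inv\<^bsub>G\<^esub> g) e))"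

definition geometric_nielsen ::
  "('g, 'b) monoid_scheme \<Rightarrow> ('v, 'e) sgraph \<Rightarrow> ('g \<Rightarrow> 'e \<Rightarrow> 'e)
   \<Rightarrow> 'e set \<Rightarrow> ('v \<Rightarrow> 'v) \<Rightarrow> ('e \<Rightarrow> int) \<Rightarrow> bool" where
  "geometric_nielsen G X acte Ht ftil \<rho> \<equiv>
     (\<exists>u v. ftil u = u \<and> ftil v = v \<and> \<rho> = proj_perp Ht (path_chain X u v)) \<and>
     \<comment> \<open>GNC1\<close>
     (\<forall>g1\<in>carrier G. \<forall>g2\<in>carrier G. g1 \<noteq> g2 \<longrightarrow>
        (let S = supp (translate G acte g1 \<rho>) \<inter> supp (translate G acte g2 \<rho>)
         in S = {} \<or> single_edge X S)) \<and>
     \<comment> \<open>GNC2\<close>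
     (\<forall>e. e \<notin> Ht \<longrightarrow>
        (\<exists>g1\<in>carrier G. \<exists>g2\<in>carrier G. g1 \<noteq> g2 \<and>
           {g\<in>carrier G. e \<in> supp (translate G acte g \<rho>)} = {g1, g2} \<and>
           supp (translate G acte g1 \<rho>) \<inter> supp (translate G acte g2 \<rho>) = {e, rv X e})) \<and>
     \<comment> \<open>GNC3\<close>
     (\<exists>g1\<in>carrier G. \<exists>g2\<in>carrier G. g1 \<otimes>\<^bsub>G\<^esub> g2 \<noteq> g2 \<otimes>\<^bsub>G\<^esub> g1 \<and>
        supp \<rho> \<inter> supp (translate G acte g1 \<rho>) \<noteq> {} \<and>
        supp \<rho> \<inter> supp (translate G acte g2 \<rho>) \<noteq> {})"

definition T_adj ::
  "('g, 'b) monoid_scheme \<Rightarrow> ('g \<Rightarrow> 'e \<Rightarrow> 'e) \<Rightarrow> ('e \<Rightarrow> int) \<Rightarrow> 'g \<Rightarrow> 'g \<Rightarrow> bool" where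
  "T_adj G acte \<rho> g1 g2 \<equiv> g1 \<in> carrier G \<and> g2 \<in> carrier G \<and> g1 \<noteq> g2 \<and>
     supp (translate G acte g1 \<rho>) \<inter> supp (translate G acte g2 \<rho>) \<noteq> {}"

definition T_edge_path ::
  "('g, 'b) monoid_scheme \<Rightarrow> ('g \<Rightarrow> 'e \<Rightarrow> 'e) \<Rightarrow> ('e \<Rightarrow> int) \<Rightarrow> (nat \<Rightarrow> 'g) \<Rightarrow> nat \<Rightarrow> bool" where
  "T_edge_path G acte \<rho> p m \<equiv> (\<forall>j\<in>{0..m}. p j \<in> carrier G) \<and>
     (\<forall>j\<in>{1..m}. T_adj G acte \<rho> (p (j - 1)) (p j))"

text \<open>Orientation on a closed edge-path (p 0 = p m): for each index j \<in> {1..m}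
  (indices mod m, so index 0 is index m) an oriented edge ori j representing e_j,
  i.e. lying in supp(g_{j-1}\<rho>) \<inter> supp(g_j\<rho>) (which is {e_j, rev e_j}), such that
  (g_j \<rho>)_{e_j} = -(g_j \<rho>)_{e_{j+1}} for all 0 \<le> j < m.\<close>
definition has_orientation ::
  "('g, 'b) monoid_scheme \<Rightarrow> ('g \<Rightarrow> 'e \<Rightarrow> 'e) \<Rightarrow> ('e \<Rightarrow> int) \<Rightarrow> (nat \<Rightarrow> 'g) \<Rightarrow> nat \<Rightarrow> bool" where
  "has_orientation G acte \<rho> p m \<equiv>
     (\<exists>ori :: nat \<Rightarrow> 'e.
        (\<forall>j\<in>{1..m}. ori j \<in> supp (translate G acte (p (j - 1)) \<rho>) \<inter> supp (translate G acte (p j) \<rho>)) \<and>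
        (\<forall>j<m. translate G acte (p j) \<rho> (ori (if j = 0 then m else j))
               = - translate G acte (p j) \<rho> (ori (Suc j))))"

end

theory Submission
  imports Defs
begin

text \<open>Suppose \<open>p\<^sub>0, \<dots>, p\<^sub>m\<^sub>-\<^sub>1\<close> are distinct; then \<open>m \<noteq> 1\<close>, and \<open>m = 2\<close> is trivial.
  For \<open>m \<ge> 3\<close>, GNC2 says that the edge \<open>e\<^sub>j\<^sub>+\<^sub>1\<close> shared by \<open>p\<^sub>j\<rho>\<close> and \<open>p\<^sub>j\<^sub>+\<^sub>1\<rho>\<close>
  lies in no other translate of the cycle. Each translate is the chain of a geodesic of the tree
  with the edges of \<open>\<tilde>H\<close> removed, and consecutive geodesics share an edge, so all the other
  geodesics of the cycle, with their shared edges, lie in one half-tree bounded by \<open>e\<^sub>j\<^sub>+\<^sub>1\<close>;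
  orient \<open>e\<^sub>j\<^sub>+\<^sub>1\<close> towards it. At \<open>p\<^sub>j\<close> the oriented edges \<open>e\<^sub>j\<close> and \<open>e\<^sub>j\<^sub>+\<^sub>1\<close> of the
  geodesic of \<open>p\<^sub>j\<rho>\<close> then point at each other, and in a tree this forces the geodesic to
  traverse them in opposite directions.\<close>

section \<open>Reduced paths in trees\<close>

lemma reduced_path_Nil [simp]: "reduced_path X u v [] \<longleftrightarrow> u = v"
  by (simp add: reduced_path_def)

lemma reduced_path_single [simp]: "reduced_path X u v [e] \<longleftrightarrow> ini X e = u \<and> ter X e = v"
  by (simp add: reduced_path_def)

lemma reduced_path_Cons_Cons [simp]:
  "reduced_path X u v (e # f # es) \<longleftrightarrow>
     ini X e = u \<and> ter X e = ini X f \<and> f \<noteq> rv X e \<and> reduced_path X (ini X f) v (f # es)"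
proof -
  have shift: "(\<forall>i. Suc i < Suc (Suc n) \<longrightarrow> Q i) \<longleftrightarrow> Q 0 \<and> (\<forall>i. Suc i < Suc n \<longrightarrow> Q (Suc i))"
    for n and Q :: "nat \<Rightarrow> bool"
    using less_Suc_eq_0_disj by auto
  show ?thesis
    unfolding reduced_path_def by (simp only: list.simps length_Cons shift) auto
qed

lemma reduced_path_ConsD: "reduced_path X u v (e # es) \<Longrightarrow> ini X e = u \<and> reduced_path X (ter X e) v es"
  by (cases es) auto

lemma reduced_path_prefix: "reduced_path X u v (xs @ y # ys) \<Longrightarrow> reduced_path X u (ini X y) xs"
proof (induction xs arbitrary: u)
  case Nil
  then show ?case by (cases ys) auto
next
  case (Cons x xs)
  then show ?case by (cases xs) auto
qed

lemma reduced_path_suffix: "reduced_path X u v (xs @ ys) \<Longrightarrow> \<exists>w. reduced_path X w v ys"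
  by (induction xs arbitrary: u) (auto dest: reduced_path_ConsD)

lemma reduced_path_snoc:
  "reduced_path X u (ini X f) xs \<Longrightarrow> xs = [] \<or> f \<noteq> rv X (last xs) \<Longrightarrow>
   reduced_path X u (ter X f) (xs @ [f])"
proof (induction xs arbitrary: u)
  case Nil
  then show ?case by auto
next
  case (Cons x xs)
  then show ?case by (cases xs) auto
qed

lemma reduced_path_snocD: "reduced_path X u v (xs @ [f]) \<Longrightarrow> ter X f = v"
proof (induction xs arbitrary: u)
  case Nil
  then show ?case by auto
next
  case (Cons x xs)
  then show ?case by (cases xs) auto
qed

lemma is_treeD:
  assumes "is_tree X"
  shows "rv X (rv X e) = e" "rv X e \<noteq> e" "ini X (rv X e) = ter X e" "ter X (rv X e) = ini X e"
  using assms unfolding is_tree_def serre_graph_def by metis+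

lemma reduced_path_geod: "is_tree X \<Longrightarrow> reduced_path X u v (geod X u v)"
  unfolding is_tree_def geod_def by (metis theI')

lemma geod_eqI: "is_tree X \<Longrightarrow> reduced_path X u v es \<Longrightarrow> geod X u v = es"
  unfolding is_tree_def geod_def by (metis the1_equality)

lemma geod_self [simp]: "is_tree X \<Longrightarrow> geod X u u = []"
  by (simp add: geod_eqI)

lemma reduced_path_closed: "is_tree X \<Longrightarrow> reduced_path X u u es \<Longrightarrow> es = []"
  using geod_eqI reduced_path_Nil by metis

lemma reduced_path_no_repeat:
  assumes "is_tree X" "reduced_path X u v (xs @ e # ys @ e # zs)"
  shows False
proof -
  obtain w where "reduced_path X w v (e # ys @ e # zs)"
    using reduced_path_suffix[of X u v xs] assms(2) by auto
  then have "reduced_path X (ini X e) (ini X e) (e # ys)"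
    using reduced_path_prefix[of X w v "e # ys" e zs] reduced_path_ConsD by fastforce
  then show False using reduced_path_closed[OF assms(1)] by blast
qed

lemma reduced_path_no_return:
  assumes "is_tree X" "reduced_path X u v (xs @ e # ys @ rv X e # zs)"
  shows False
proof -
  obtain w where w: "reduced_path X w v (e # ys @ rv X e # zs)"
    using reduced_path_suffix[of X u v xs] assms(2) by auto
  then have "reduced_path X (ter X e) v (ys @ rv X e # zs)"
    using reduced_path_ConsD by metis
  then have "reduced_path X (ter X e) (ter X e) ys"
    using reduced_path_prefix is_treeD(3)[OF assms(1)] by metis
  then have "ys = []" using reduced_path_closed[OF assms(1)] by blast
  then show False using w by auto
qed

lemma reduced_path_not_both_orientations:
  assumes "is_tree X" "reduced_path X u v es" "e \<in> set es" "rv X e \<in> set es"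
  shows False
proof -
  obtain xs ys where es: "es = xs @ e # ys" using assms(3) split_list by metis
  have "rv X e \<in> set xs \<or> rv X e \<in> set ys" using assms(4) es is_treeD(2)[OF assms(1)] by auto
  then show False
  proof
    assume "rv X e \<in> set xs"
    then obtain a b where "xs = a @ rv X e # b" using split_list by metis
    then show False
      using reduced_path_no_return[OF assms(1), of u v a "rv X e" b ys] assms(2) es
        is_treeD(1)[OF assms(1)] by simp
  next
    assume "rv X e \<in> set ys"
    then obtain a b where "ys = a @ rv X e # b" using split_list by metis
    then show False using reduced_path_no_return[OF assms(1)] assms(2) es by simp
  qed
qed

section \<open>Path chains and half-trees\<close>

definition edge_chain :: "('v, 'e) sgraph \<Rightarrow> 'e \<Rightarrow> 'e \<Rightarrow> int" where
  "edge_chain X f e = (if e = f then 1 else if e = rv X f then -1 else 0)"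

definition list_chain :: "('v, 'e) sgraph \<Rightarrow> 'e list \<Rightarrow> 'e \<Rightarrow> int" where
  "list_chain X L e = (if e \<in> set L then 1 else if rv X e \<in> set L then -1 else 0)"

lemma path_chain_list_chain: "path_chain X a b = list_chain X (geod X a b)"
  by (simp add: path_chain_def list_chain_def fun_eq_iff)

lemma list_chain_snoc:
  assumes t: "is_tree X" and L: "reduced_path X u v (L @ [f])"
  shows "list_chain X (L @ [f]) e = list_chain X L e + edge_chain X f e"
proof -
  have "f \<notin> set L"
    using reduced_path_no_repeat[OF t, of u v _ f _ "[]"] L split_list by fastforce
  moreover have "rv X f \<notin> set L"
    using reduced_path_not_both_orientations[OF t L] by auto
  ultimately show ?thesis
    using is_treeD[OF t, of f] is_treeD(1)[OF t, of e]
    unfolding list_chain_def edge_chain_def by auto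
qed

lemma path_chain_append_edge:
  assumes t: "is_tree X"
  shows "path_chain X a (ter X f) e = path_chain X a (ini X f) e + edge_chain X f e"
proof -
  let ?q = "geod X a (ini X f)"
  have q: "reduced_path X a (ini X f) ?q" by (rule reduced_path_geod[OF t])
  show ?thesis
  proof (cases "?q \<noteq> [] \<and> last ?q = rv X f")
    case True
    then obtain q' where q': "?q = q' @ [rv X f]" by (metis append_butlast_last_id)
    then have "reduced_path X a (ter X f) q'"
      using reduced_path_prefix[of X a "ini X f" q' "rv X f" "[]"] q is_treeD(3)[OF t] by simp
    then have "geod X a (ter X f) = q'" by (rule geod_eqI[OF t])
    moreover have "edge_chain X (rv X f) e = - edge_chain X f e"
      using is_treeD[OF t, of f] unfolding edge_chain_def by auto
    ultimately show ?thesis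
      using list_chain_snoc[OF t, of a "ini X f" q' "rv X f" e] q q'
      by (simp add: path_chain_list_chain)
  next
    case False
    then have qf: "reduced_path X a (ter X f) (?q @ [f])"
      using reduced_path_snoc[OF q] is_treeD(1)[OF t] by metis
    then have "geod X a (ter X f) = ?q @ [f]" by (rule geod_eqI[OF t])
    then show ?thesis using list_chain_snoc[OF t qf] by (simp add: path_chain_list_chain)
  qed
qed

lemma path_chain_trans:
  assumes t: "is_tree X"
  shows "path_chain X a c e = path_chain X a b e + path_chain X b c e"
proof -
  have "reduced_path X b c L \<Longrightarrow> path_chain X a c e = path_chain X a b e + path_chain X b c e" for L
  proof (induction L arbitrary: c rule: rev_induct)
    case Nil
    then show ?case using t by (simp add: path_chain_def)
  next
    case (snoc f L)
    have "c = ter X f" using reduced_path_snocD snoc.prems by metis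
    moreover have "reduced_path X b (ini X f) L"
      using reduced_path_prefix[of X b c L f "[]"] snoc.prems by simp
    ultimately show ?case
      using snoc.IH path_chain_append_edge[OF t, of a f e] path_chain_append_edge[OF t, of b f e]
      by simp
  qed
  then show ?thesis using reduced_path_geod[OF t] by blast
qed

lemma path_chain_self [simp]: "is_tree X \<Longrightarrow> path_chain X a a e = 0"
  by (simp add: path_chain_def)

lemma path_chain_values: "path_chain X a b e \<in> {-1, 0, 1}"
  by (simp add: path_chain_def)

lemma path_chain_rv:
  assumes t: "is_tree X"
  shows "path_chain X a b (rv X e) = - path_chain X a b e"
  using reduced_path_not_both_orientations[OF t reduced_path_geod[OF t], where e = e] is_treeD(1)[OF t, of e]
  by (auto simp: path_chain_def)

lemma path_chain_swap:
  assumes t: "is_tree X"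
  shows "path_chain X b a e = - path_chain X a b e"
  using path_chain_trans[OF t, where a = a and c = a and b = b and e = e] t by simp

lemma path_chain_eq_1_iff: "path_chain X a b e = 1 \<longleftrightarrow> e \<in> set (geod X a b)"
  by (simp add: path_chain_def)

lemma path_chain_eq_0_iff:
  "path_chain X a b e = 0 \<longleftrightarrow> e \<notin> set (geod X a b) \<and> rv X e \<notin> set (geod X a b)"
  by (simp add: path_chain_def)

text \<open>\<open>side X e x\<close> is 1 if the geodesic from \<open>ini X e\<close> to \<open>x\<close> runs through \<open>e\<close>, i.e.\ \<open>x\<close> lies
  in the half-tree beyond \<open>e\<close>, and 0 otherwise.\<close>
definition side :: "('v, 'e) sgraph \<Rightarrow> 'e \<Rightarrow> 'v \<Rightarrow> int" where
  "side X e x = path_chain X (ini X e) x e"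

lemma path_chain_side_diff: "is_tree X \<Longrightarrow> path_chain X a b e = side X e b - side X e a"
  unfolding side_def using path_chain_trans[of X "ini X e" b e a] by simp

lemma side_ter: "is_tree X \<Longrightarrow> side X e (ter X e) = 1"
  using path_chain_append_edge[of X "ini X e" e e] by (simp add: side_def edge_chain_def)

lemma side_values:
  assumes t: "is_tree X"
  shows "side X e x = 0 \<or> side X e x = 1"
proof -
  have "side X e x = 1 + path_chain X (ter X e) x e"
    using path_chain_side_diff[OF t, of "ter X e" x e] side_ter[OF t, of e] by simp
  then show ?thesis
    using path_chain_values[of X "ter X e" x e] path_chain_values[of X "ini X e" x e]
    unfolding side_def by auto
qed

lemma side_rv:
  assumes t: "is_tree X"
  shows "side X (rv X e) x = 1 - side X e x"
proof -
  have "side X (rv X e) x = - path_chain X (ter X e) x e"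
    unfolding side_def using is_treeD[OF t, of e] path_chain_rv[OF t] by simp
  also have "\<dots> = 1 - side X e x"
    using path_chain_side_diff[OF t, of "ter X e" x e] side_ter[OF t, of e] by simp
  finally show ?thesis .
qed

lemma side_geod_edge:
  assumes t: "is_tree X" and f: "path_chain X a b f \<noteq> 0" and e: "path_chain X a b e = 0"
  shows "side X e (ini X f) = side X e a \<and> side X e (ter X f) = side X e a"
proof -
  have on_geod: "side X e (ini X f') = side X e a \<and> side X e (ter X f') = side X e a"
    if f': "f' \<in> set (geod X a b)" for f'
  proof -
    obtain ps qs where L: "geod X a b = ps @ f' # qs" using f' split_list by metis
    have "reduced_path X a (ini X f') ps"
      using reduced_path_prefix[of X a b ps f' qs] reduced_path_geod[OF t, of a b] L by simp
    then have "geod X a (ini X f') = ps" by (rule geod_eqI[OF t])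
    then have "path_chain X a (ini X f') e = 0" using e L by (simp add: path_chain_eq_0_iff)
    moreover have "edge_chain X f' e = 0"
      using e f' is_treeD(1)[OF t, of f'] by (auto simp: path_chain_eq_0_iff edge_chain_def)
    ultimately show ?thesis
      using path_chain_side_diff[OF t, of a "ini X f'" e] path_chain_append_edge[OF t, of a f' e]
        path_chain_side_diff[OF t, of a "ter X f'" e] by simp
  qed
  show ?thesis
  proof (cases "f \<in> set (geod X a b)")
    case True
    then show ?thesis by (rule on_geod)
  next
    case False
    then have "rv X f \<in> set (geod X a b)" using f by (auto simp: path_chain_eq_0_iff)
    then show ?thesis using on_geod[of "rv X f"] is_treeD[OF t, of f] by auto
  qed
qed

lemma facing_edges_not_on_geod:
  assumes t: "is_tree X" and o1: "o1 \<in> set (geod X a b)" and o2: "o2 \<in> set (geod X a b)"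
    and facing: "side X o1 (ini X o2) = 1" "side X o2 (ini X o1) = 1"
  shows False
proof -
  have side_a: "side X e a = 0" if "e \<in> set (geod X a b)" for e
  proof -
    have "side X e b - side X e a = 1"
      using that path_chain_side_diff[OF t, of a b e] by (simp add: path_chain_eq_1_iff[symmetric])
    then show ?thesis using side_values[OF t, of e a] side_values[OF t, of e b] by linarith
  qed
  have prefix_geod: "geod X a (ini X f) = ps" if "geod X a b = ps @ f # qs" for ps f qs
    using reduced_path_prefix[of X a b ps f qs] reduced_path_geod[OF t, of a b] that
      geod_eqI[OF t] by metis
  have before: "e \<in> set (geod X a (ini X f))"
    if "side X e (ini X f) = 1" "e \<in> set (geod X a b)" for e f
  proof -
    have "path_chain X a (ini X f) e = 1"
      using path_chain_side_diff[OF t, of a "ini X f" e] side_a[OF that(2)] that(1) by simp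
    then show ?thesis by (simp add: path_chain_eq_1_iff)
  qed
  txt \<open>Each of the two edges occurs on the geodesic before the other.\<close>
  obtain ps qs where L: "geod X a b = ps @ o1 # qs" and o1_ps: "o1 \<notin> set ps"
    using o1 split_list_first by metis
  have "o2 \<in> set ps" using before[OF facing(2) o2] prefix_geod[OF L] by simp
  then obtain ps1 ps2 where ps: "ps = ps1 @ o2 # ps2" using split_list by metis
  have "o1 \<in> set (geod X a (ini X o2))" using before[OF facing(1) o1] .
  then show False using prefix_geod[of ps1 o2 "ps2 @ o1 # qs"] L ps o1_ps by simp
qed

lemma facing_edges_opposite_signs:
  assumes t: "is_tree X" and o1: "path_chain X a b o1 \<noteq> 0" and o2: "path_chain X a b o2 \<noteq> 0"
    and facing: "side X o1 (ini X o2) = 1" "side X o2 (ini X o1) = 1"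
  shows "path_chain X a b o1 = - path_chain X a b o2"
proof (rule ccontr)
  assume "path_chain X a b o1 \<noteq> - path_chain X a b o2"
  then have "path_chain X a b o1 = path_chain X a b o2"
    using o1 o2 path_chain_values[of X a b o1] path_chain_values[of X a b o2] by auto
  then have "(o1 \<in> set (geod X a b) \<and> o2 \<in> set (geod X a b)) \<or>
             (o1 \<in> set (geod X b a) \<and> o2 \<in> set (geod X b a))"
    using o1 path_chain_values[of X a b o1]
      path_chain_swap[OF t, of a b o1] path_chain_swap[OF t, of a b o2]
    by (auto simp: path_chain_eq_1_iff[symmetric])
  then show False using facing_edges_not_on_geod[OF t _ _ facing] by blast
qed

section \<open>Equivariance under the deck action\<close>

lemma reduced_path_map:
  assumes "\<And>e. ini X (\<phi> e) = \<psi> (ini X e)" "\<And>e. ter X (\<phi> e) = \<psi> (ter X e)"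
    and "\<And>e. \<phi> (rv X e) = rv X (\<phi> e)" and "inj \<phi>"
  shows "reduced_path X u v L \<Longrightarrow> reduced_path X (\<psi> u) (\<psi> v) (map \<phi> L)"
proof (induction L arbitrary: u)
  case Nil
  then show ?case by simp
next
  case (Cons e L)
  then show ?case
    using assms by (cases L) (auto simp: inj_eq simp flip: assms(3))
qed

lemma deck_actionD:
  assumes "deck_action G X act acte"
  shows "group G" "is_tree X" "\<And>e. acte \<one>\<^bsub>G\<^esub> e = e"
    "\<And>g h e. g \<in> carrier G \<Longrightarrow> h \<in> carrier G \<Longrightarrow> acte (g \<otimes>\<^bsub>G\<^esub> h) e = acte g (acte h e)"
    "\<And>g e. g \<in> carrier G \<Longrightarrow> ini X (acte g e) = act g (ini X e)"
    "\<And>g e. g \<in> carrier G \<Longrightarrow> ter X (acte g e) = act g (ter X e)"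
    "\<And>g e. g \<in> carrier G \<Longrightarrow> acte g (rv X e) = rv X (acte g e)"
  using assms unfolding deck_action_def by auto

lemma deck_action_acte_inv:
  assumes d: "deck_action G X act acte" and g: "g \<in> carrier G"
  shows "acte (inv\<^bsub>G\<^esub> g) (acte g e) = e" "acte g (acte (inv\<^bsub>G\<^esub> g) e) = e"
proof -
  interpret group G by (rule deck_actionD(1)[OF d])
  show "acte (inv\<^bsub>G\<^esub> g) (acte g e) = e" "acte g (acte (inv\<^bsub>G\<^esub> g) e) = e"
    using deck_actionD(3,4)[OF d] g by (metis inv_closed l_inv r_inv)+
qed

lemma geod_act:
  assumes d: "deck_action G X act acte" and g: "g \<in> carrier G"
  shows "geod X (act g a) (act g b) = map (acte g) (geod X a b)"
proof -
  have "inj (acte g)" by (metis deck_action_acte_inv(1)[OF d g] injI)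
  then show ?thesis
    using reduced_path_map[of X "acte g" "act g"] deck_actionD(2,5-7)[OF d] g
      reduced_path_geod geod_eqI by metis
qed

lemma path_chain_act:
  assumes d: "deck_action G X act acte" and g: "g \<in> carrier G"
  shows "path_chain X (act g a) (act g b) (acte g e) = path_chain X a b e"
proof -
  have "inj (acte g)" by (metis deck_action_acte_inv(1)[OF d g] injI)
  then show ?thesis
    unfolding path_chain_def geod_act[OF d g] deck_actionD(7)[OF d g, symmetric]
    by (simp add: inj_image_mem_iff)
qed

lemma translate_proj_perp_path_chain:
  assumes d: "deck_action G X act acte" and H: "lifted_subgraph G X act acte Hv Ht"
    and g: "g \<in> carrier G"
  shows "translate G acte g (proj_perp Ht (path_chain X u v)) =
         proj_perp Ht (path_chain X (act g u) (act g v))"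
proof
  fix e
  interpret group G by (rule deck_actionD(1)[OF d])
  have "acte (inv\<^bsub>G\<^esub> g) e \<in> Ht \<longleftrightarrow> e \<in> Ht"
    using H g deck_action_acte_inv(2)[OF d g, of e] unfolding lifted_subgraph_def by (metis inv_closed)
  moreover have "path_chain X u v (acte (inv\<^bsub>G\<^esub> g) e) = path_chain X (act g u) (act g v) e"
    using path_chain_act[OF d g, of u v] deck_action_acte_inv(2)[OF d g] by metis
  ultimately show "translate G acte g (proj_perp Ht (path_chain X u v)) e =
                   proj_perp Ht (path_chain X (act g u) (act g v)) e"
    unfolding translate_def proj_perp_def by simp
qed

lemma lifted_subgraph_rv_iff:
  "lifted_subgraph G X act acte Hv Ht \<Longrightarrow> is_tree X \<Longrightarrow> rv X e \<in> Ht \<longleftrightarrow> e \<in> Ht"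
  unfolding lifted_subgraph_def by (metis is_treeD(1))

section \<open>Cycles of translates\<close>

definition cyclic_orientation :: "(nat \<Rightarrow> 'e \<Rightarrow> int) \<Rightarrow> nat \<Rightarrow> (nat \<Rightarrow> 'e) \<Rightarrow> bool" where
  "cyclic_orientation c m ori \<longleftrightarrow>
     (\<forall>k. ori (k + m) = ori k \<and> ori k \<in> supp (c k) \<inter> supp (c (Suc k)) \<and>
          c (Suc k) (ori k) = - c (Suc k) (ori (Suc k)))"

lemma mod_add_neq:
  assumes "0 < i" "i < (m::nat)"
  shows "(j + i) mod m \<noteq> j mod m"
proof
  assume "(j + i) mod m = j mod m"
  then have "m dvd i" using mod_eq_dvd_iff_nat[of j "j + i" m] by simp
  then show False using assms by (simp add: nat_dvd_not_less)
qed

lemma cyclic_orientation_period_two: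
  assumes t: "is_tree X" and c_periodic: "\<And>k. c (k + 2) = c k"
    and c_rv: "\<And>k e. c k (rv X e) = - c k e" and e0: "e0 \<in> supp (c 0) \<inter> supp (c 1)"
  shows "cyclic_orientation c 2 (\<lambda>k. if even k then e0 else rv X e0)" (is "cyclic_orientation _ _ ?ori")
proof -
  have "c (r + 2 * q) = c r" for r q
  proof (induction q)
    case (Suc q)
    then show ?case using c_periodic[of "r + 2 * q"] by (simp add: add.assoc)
  qed simp
  then have "c k = c (k mod 2)" for k
    by (metis mod_mult_div_eq mult.commute)
  then have c_parity: "c k = (if even k then c 0 else c 1)" for k
    by (metis One_nat_def even_iff_mod_2_eq_zero odd_iff_mod_2_eq_one)
  show ?thesis
    unfolding cyclic_orientation_def
  proof (intro allI)
    fix k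
    show "?ori (k + 2) = ?ori k \<and> ?ori k \<in> supp (c k) \<inter> supp (c (Suc k)) \<and>
          c (Suc k) (?ori k) = - c (Suc k) (?ori (Suc k))"
      using e0 c_rv[of _ e0] is_treeD(1)[OF t, of e0] c_parity[of k] c_parity[of "Suc k"]
      by (cases "even k") (simp_all add: supp_def)
  qed
qed

text \<open>The closed path of translates, extended periodically: \<open>c k\<close> is the translate of \<open>\<rho>\<close> by
  \<open>p (k mod m)\<close>, whose geodesic runs from \<open>A k\<close> to \<open>B k\<close>.\<close>
locale chain_cycle =
  fixes X :: "('v, 'e) sgraph" and Ht :: "'e set" and A B :: "nat \<Rightarrow> 'v"
    and c :: "nat \<Rightarrow> 'e \<Rightarrow> int" and m :: nat
  assumes tree: "is_tree X" and three_le_m: "3 \<le> m"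
    and Ht_rv: "\<And>e. rv X e \<in> Ht \<longleftrightarrow> e \<in> Ht"
    and c_eq: "\<And>k. c k = proj_perp Ht (path_chain X (A k) (B k))"
    and c_periodic: "\<And>k. c (k + m) = c k"
    and overlap: "\<And>k. supp (c k) \<inter> supp (c (Suc k)) \<noteq> {}"
    and shared_only_by_neighbours: "\<And>e j k. e \<in> supp (c j) \<Longrightarrow> e \<in> supp (c (Suc j)) \<Longrightarrow>
      e \<in> supp (c k) \<Longrightarrow> k mod m = j mod m \<or> k mod m = Suc j mod m"
begin

definition shared_edge :: "nat \<Rightarrow> 'e" where
  "shared_edge k = (SOME e. e \<in> supp (c k) \<inter> supp (c (Suc k)))"

lemma shared_edge: "shared_edge k \<in> supp (c k) \<inter> supp (c (Suc k))"
  unfolding shared_edge_def by (rule someI_ex) (use overlap[of k] in blast)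

lemma shared_edge_periodic: "shared_edge (k + m) = shared_edge k"
  unfolding shared_edge_def using c_periodic[of "Suc k"] by (simp add: c_periodic)

lemma c_nonzero_iff: "c k e \<noteq> 0 \<longleftrightarrow> e \<notin> Ht \<and> path_chain X (A k) (B k) e \<noteq> 0"
  by (simp add: c_eq proj_perp_def)

lemma c_rv: "c k (rv X e) = - c k e"
  by (simp add: c_eq proj_perp_def Ht_rv path_chain_rv[OF tree])

lemma shared_edge_path_chain:
  "path_chain X (A k) (B k) (shared_edge k) \<noteq> 0"
  "path_chain X (A (Suc k)) (B (Suc k)) (shared_edge k) \<noteq> 0"
  using shared_edge[of k] by (auto simp: supp_def c_nonzero_iff)

lemma far_path_chain_avoids_shared_edge:
  assumes "2 \<le> i" "i < m"
  shows "path_chain X (A (j + i)) (B (j + i)) (shared_edge j) = 0"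
proof -
  have "(j + i) mod m \<noteq> j mod m" "(j + i) mod m \<noteq> Suc j mod m"
    using mod_add_neq[of i m j] mod_add_neq[of "i - 1" m "Suc j"] assms by auto
  then have "shared_edge j \<notin> supp (c (j + i))"
    using shared_only_by_neighbours shared_edge[of j] by blast
  then show ?thesis using shared_edge[of j] by (auto simp: supp_def c_nonzero_iff)
qed

lemma side_far_arc:
  "2 \<le> i \<Longrightarrow> i < m \<Longrightarrow> side X (shared_edge j) (A (j + i)) = side X (shared_edge j) (A (j + 2))"
proof (induction i rule: nat_induct_at_least)
  case base
  then show ?case by simp
next
  case (Suc i)
  let ?e = "shared_edge j" and ?f = "shared_edge (j + i)"
  have "path_chain X (A (j + i)) (B (j + i)) ?e = 0"
    using far_path_chain_avoids_shared_edge Suc by simp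
  then have "side X ?e (ini X ?f) = side X ?e (A (j + i))"
    using side_geod_edge[OF tree shared_edge_path_chain(1)] by blast
  moreover have "path_chain X (A (Suc (j + i))) (B (Suc (j + i))) ?e = 0"
    using far_path_chain_avoids_shared_edge[of "Suc i" j] Suc by simp
  then have "side X ?e (ini X ?f) = side X ?e (A (Suc (j + i)))"
    using side_geod_edge[OF tree shared_edge_path_chain(2)] by blast
  ultimately show ?case using Suc by simp
qed

lemma side_next_shared_edge:
  "side X (shared_edge j) (ini X (shared_edge (Suc j))) = side X (shared_edge j) (A (j + 2))"
  "side X (shared_edge j) (ter X (shared_edge (Suc j))) = side X (shared_edge j) (A (j + 2))"
proof -
  have "path_chain X (A (Suc (Suc j))) (B (Suc (Suc j))) (shared_edge j) = 0"
    using far_path_chain_avoids_shared_edge[of 2 j] three_le_m by simp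
  then show "side X (shared_edge j) (ini X (shared_edge (Suc j))) = side X (shared_edge j) (A (j + 2))"
    "side X (shared_edge j) (ter X (shared_edge (Suc j))) = side X (shared_edge j) (A (j + 2))"
    using side_geod_edge[OF tree shared_edge_path_chain(2)] by simp_all
qed

lemma side_prev_shared_edge:
  "side X (shared_edge j) (ini X (shared_edge (j + m - 1))) = side X (shared_edge j) (A (j + 2))"
  "side X (shared_edge j) (ter X (shared_edge (j + m - 1))) = side X (shared_edge j) (A (j + 2))"
proof -
  have k: "j + m - 1 = j + (m - 1)" using three_le_m by simp
  have "path_chain X (A (j + (m - 1))) (B (j + (m - 1))) (shared_edge j) = 0"
    using far_path_chain_avoids_shared_edge[of "m - 1" j] three_le_m by simp
  moreover have "side X (shared_edge j) (A (j + (m - 1))) = side X (shared_edge j) (A (j + 2))"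
    using side_far_arc[of "m - 1" j] three_le_m by simp
  ultimately show "side X (shared_edge j) (ini X (shared_edge (j + m - 1))) = side X (shared_edge j) (A (j + 2))"
    "side X (shared_edge j) (ter X (shared_edge (j + m - 1))) = side X (shared_edge j) (A (j + 2))"
    unfolding k using side_geod_edge[OF tree shared_edge_path_chain(1)] by simp_all
qed

text \<open>The shared edge, oriented towards the next shared edge and hence towards the whole rest
  of the cycle.\<close>
definition oriented_edge :: "nat \<Rightarrow> 'e" where
  "oriented_edge j =
     (if side X (shared_edge j) (ini X (shared_edge (Suc j))) = 1 then shared_edge j
      else rv X (shared_edge j))"

lemma oriented_edge_cases: "oriented_edge j = shared_edge j \<or> oriented_edge j = rv X (shared_edge j)"
  by (simp add: oriented_edge_def)

lemma side_oriented_edge: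
  assumes "side X (shared_edge j) x = side X (shared_edge j) (A (j + 2))"
  shows "side X (oriented_edge j) x = 1"
  using assms side_values[OF tree, of "shared_edge j" x] side_rv[OF tree] side_next_shared_edge(1)
  unfolding oriented_edge_def by auto

lemma oriented_edges_facing:
  "side X (oriented_edge j) (ini X (oriented_edge (Suc j))) = 1"
  "side X (oriented_edge (Suc j)) (ini X (oriented_edge j)) = 1"
proof -
  have "Suc j + m - 1 = j + m" using three_le_m by simp
  then have prev: "shared_edge (Suc j + m - 1) = shared_edge j"
    by (simp add: shared_edge_periodic)
  show "side X (oriented_edge j) (ini X (oriented_edge (Suc j))) = 1"
    using side_oriented_edge side_next_shared_edge oriented_edge_cases[of "Suc j"]
      is_treeD(3)[OF tree] by metis
  show "side X (oriented_edge (Suc j)) (ini X (oriented_edge j)) = 1"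
    using side_oriented_edge side_prev_shared_edge[of "Suc j", unfolded prev]
      oriented_edge_cases[of j] is_treeD(3)[OF tree] by metis
qed

lemma oriented_edge_supp: "oriented_edge k \<in> supp (c k) \<inter> supp (c (Suc k))"
  using shared_edge[of k] oriented_edge_cases[of k] by (auto simp: supp_def c_rv)

lemma oriented_edges_opposite_signs:
  "c (Suc k) (oriented_edge k) = - c (Suc k) (oriented_edge (Suc k))"
proof -
  have "oriented_edge k \<in> supp (c (Suc k))" "oriented_edge (Suc k) \<in> supp (c (Suc k))"
    using oriented_edge_supp by blast+
  then show ?thesis
    using facing_edges_opposite_signs[OF tree _ _ oriented_edges_facing]
    by (auto simp: supp_def c_nonzero_iff) (simp add: c_eq proj_perp_def)
qed

lemma oriented_edge_periodic: "oriented_edge (k + m) = oriented_edge k"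
  using shared_edge_periodic[of k] shared_edge_periodic[of "Suc k"]
  by (simp add: oriented_edge_def)

lemma cyclic_orientation: "cyclic_orientation c m oriented_edge"
  unfolding cyclic_orientation_def
  using oriented_edge_periodic oriented_edge_supp oriented_edges_opposite_signs by blast

end

section \<open>Closed edge-paths in \<open>T\<^sub>\<rho>\<close>\<close>

lemma has_orientation_if_cyclic_orientation:
  assumes ori: "cyclic_orientation (\<lambda>k. translate G acte (p (k mod m)) \<rho>) m ori"
    and closed: "p 0 = p m" and m: "1 \<le> m"
  shows "has_orientation G acte \<rho> p m"
proof -
  let ?R = "\<lambda>g. translate G acte g \<rho>"
  have ori_k: "ori (k + m) = ori k" "ori k \<in> supp (?R (p (k mod m))) \<inter> supp (?R (p (Suc k mod m)))"
    "?R (p (Suc k mod m)) (ori k) = - ?R (p (Suc k mod m)) (ori (Suc k))" for k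
    using ori unfolding cyclic_orientation_def by simp_all
  have p_mod: "p (k mod m) = p k" if "k \<le> m" for k
    using that closed by (cases "k = m") auto
  show ?thesis
    unfolding has_orientation_def
  proof (intro exI[of _ "\<lambda>j. ori (j - 1)"] conjI ballI allI impI)
    fix j
    assume "j \<in> {1..m}"
    then have "Suc (j - 1) = j" "j - 1 \<le> m" "j \<le> m" by auto
    then show "ori (j - 1) \<in> supp (?R (p (j - 1))) \<inter> supp (?R (p j))"
      using ori_k(2)[of "j - 1"] p_mod by metis
  next
    fix j
    assume j: "j < m"
    show "?R (p j) (ori ((if j = 0 then m else j) - 1)) = - ?R (p j) (ori (Suc j - 1))"
    proof (cases "j = 0")
      case True
      have "Suc (m - 1) = m" using m by simp
      then show ?thesis
        using ori_k(3)[of "m - 1"] ori_k(1)[of 0] True by simp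
    next
      case False
      then have "Suc (j - 1) = j" by simp
      then show ?thesis
        using ori_k(3)[of "j - 1"] p_mod[of j] j False by simp
    qed
  qed
qed

lemma closed_T_edge_path_adj:
  assumes path: "T_edge_path G acte \<rho> p m" and closed: "p 0 = p m" and m: "1 \<le> m"
  shows "T_adj G acte \<rho> (p (k mod m)) (p (Suc k mod m))"
proof (cases "Suc (k mod m) = m")
  case True
  then have "Suc k mod m = 0" by (metis mod_Suc)
  then show ?thesis
    using path True closed unfolding T_edge_path_def by (metis atLeastAtMost_iff diff_Suc_1 m order_refl)
next
  case False
  then have "Suc k mod m = Suc (k mod m)" "Suc (k mod m) \<le> m"
    using m by (simp_all add: mod_Suc Suc_leI)
  then show ?thesis
    using path unfolding T_edge_path_def by (metis atLeastAtMost_iff diff_Suc_1 le_add1 plus_1_eq_Suc)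
qed

lemma geometric_nielsen_supp_translates:
  assumes d: "deck_action G X act acte" and H: "lifted_subgraph G X act acte Hv Ht"
    and N: "geometric_nielsen G X acte Ht ftil \<rho>"
    and carrier: "g1 \<in> carrier G" "g2 \<in> carrier G" "g \<in> carrier G" and "g1 \<noteq> g2"
    and e: "e \<in> supp (translate G acte g1 \<rho>)" "e \<in> supp (translate G acte g2 \<rho>)"
      "e \<in> supp (translate G acte g \<rho>)"
  shows "g = g1 \<or> g = g2"
proof -
  obtain u v where "\<rho> = proj_perp Ht (path_chain X u v)"
    using N unfolding geometric_nielsen_def by blast
  then have "e \<notin> Ht"
    using e(1) translate_proj_perp_path_chain[OF d H carrier(1)] by (auto simp: supp_def proj_perp_def)
  then obtain h1 h2 where pair: "{g \<in> carrier G. e \<in> supp (translate G acte g \<rho>)} = {h1, h2}"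
    using N unfolding geometric_nielsen_def by blast
  have "g1 \<in> {h1, h2}" "g2 \<in> {h1, h2}" "g \<in> {h1, h2}"
    using carrier e unfolding pair[symmetric] by blast+
  then show ?thesis using \<open>g1 \<noteq> g2\<close> by auto
qed

lemma chain_cycle_of_closed_T_edge_path:
  assumes d: "deck_action G X act acte" and H: "lifted_subgraph G X act acte Hv Ht"
    and N: "geometric_nielsen G X acte Ht ftil \<rho>" and \<rho>: "\<rho> = proj_perp Ht (path_chain X u v)"
    and path: "T_edge_path G acte \<rho> p m" and closed: "p 0 = p m" and m: "3 \<le> m"
    and distinct: "\<And>j k. j < m \<Longrightarrow> k < m \<Longrightarrow> p j = p k \<Longrightarrow> j = k"
  shows "chain_cycle X Ht (\<lambda>k. act (p (k mod m)) u) (\<lambda>k. act (p (k mod m)) v)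
           (\<lambda>k. translate G acte (p (k mod m)) \<rho>) m"
proof
  have carrier: "p (k mod m) \<in> carrier G" for k
    using path m unfolding T_edge_path_def by simp
  have adj: "T_adj G acte \<rho> (p (k mod m)) (p (Suc k mod m))" for k
    using closed_T_edge_path_adj[OF path closed] m by simp
  show "is_tree X" by (rule deck_actionD(2)[OF d])
  show "3 \<le> m" by (rule m)
  show "rv X e \<in> Ht \<longleftrightarrow> e \<in> Ht" for e
    by (rule lifted_subgraph_rv_iff[OF H deck_actionD(2)[OF d]])
  show "translate G acte (p (k mod m)) \<rho> =
        proj_perp Ht (path_chain X (act (p (k mod m)) u) (act (p (k mod m)) v))" for k
    unfolding \<rho> by (rule translate_proj_perp_path_chain[OF d H carrier])
  show "translate G acte (p ((k + m) mod m)) \<rho> = translate G acte (p (k mod m)) \<rho>" for k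
    by simp
  show "supp (translate G acte (p (k mod m)) \<rho>) \<inter> supp (translate G acte (p (Suc k mod m)) \<rho>) \<noteq> {}" for k
    using adj[of k] unfolding T_adj_def by blast
  show "k mod m = j mod m \<or> k mod m = Suc j mod m"
    if "e \<in> supp (translate G acte (p (j mod m)) \<rho>)" "e \<in> supp (translate G acte (p (Suc j mod m)) \<rho>)"
      "e \<in> supp (translate G acte (p (k mod m)) \<rho>)" for e j k
  proof -
    have "p (j mod m) \<noteq> p (Suc j mod m)" using adj[of j] unfolding T_adj_def by blast
    then have "p (k mod m) = p (j mod m) \<or> p (k mod m) = p (Suc j mod m)"
      using geometric_nielsen_supp_translates[OF d H N carrier carrier carrier _ that] by blast
    then show ?thesis using distinct[of "k mod m"] m by force
  qed
qed

lemma cyclic_orientation_of_closed_T_edge_path: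
  assumes d: "deck_action G X act acte" and H: "lifted_subgraph G X act acte Hv Ht"
    and N: "geometric_nielsen G X acte Ht ftil \<rho>"
    and path: "T_edge_path G acte \<rho> p m" and closed: "p 0 = p m" and m: "2 \<le> m"
    and distinct: "\<And>j k. j < m \<Longrightarrow> k < m \<Longrightarrow> p j = p k \<Longrightarrow> j = k"
  obtains ori where "cyclic_orientation (\<lambda>k. translate G acte (p (k mod m)) \<rho>) m ori"
proof -
  let ?c = "\<lambda>k. translate G acte (p (k mod m)) \<rho>"
  obtain u v where \<rho>: "\<rho> = proj_perp Ht (path_chain X u v)"
    using N unfolding geometric_nielsen_def by blast
  have t: "is_tree X" by (rule deck_actionD(2)[OF d])
  show ?thesis
  proof (cases "m = 2")
    case True
    have carrier: "p (k mod m) \<in> carrier G" for k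
      using path m unfolding T_edge_path_def by simp
    have "?c k (rv X e) = - ?c k e" for k e
      unfolding \<rho> translate_proj_perp_path_chain[OF d H carrier]
      using lifted_subgraph_rv_iff[OF H t, of e] path_chain_rv[OF t] by (simp add: proj_perp_def)
    moreover obtain e0 where "e0 \<in> supp (?c 0) \<inter> supp (?c 1)"
      using closed_T_edge_path_adj[OF path closed, of 0] m True unfolding T_adj_def by auto
    moreover have "?c (k + 2) = ?c k" for k using True by simp
    ultimately show ?thesis
      using that cyclic_orientation_period_two[OF t, of ?c] True by blast
  next
    case False
    interpret chain_cycle X Ht "\<lambda>k. act (p (k mod m)) u" "\<lambda>k. act (p (k mod m)) v" ?c m
      by (rule chain_cycle_of_closed_T_edge_path[OF d H N \<rho> path closed _ distinct])
        (use False m in simp)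
    show ?thesis using that cyclic_orientation by blast
  qed
qed

theorem lemma5p4:
  fixes G :: "('g, 'b) monoid_scheme"
    and X :: "('v, 'e) sgraph"
    and act :: "'g \<Rightarrow> 'v \<Rightarrow> 'v"
    and acte :: "'g \<Rightarrow> 'e \<Rightarrow> 'e"
    and Hv :: "'v set" and Ht :: "'e set"
    and ftil :: "'v \<Rightarrow> 'v"
    and \<rho> :: "'e \<Rightarrow> int"
    and p :: "nat \<Rightarrow> 'g" and m :: nat
  assumes "deck_action G X act acte"
    and "lifted_subgraph G X act acte Hv Ht"
    and "lifted_he G X act Hv Ht ftil"
    and "geometric_nielsen G X acte Ht ftil \<rho>"
    and "m \<ge> 1"
    and "T_edge_path G acte \<rho> p m"
    and "p 0 = p m"
  shows "(\<exists>j k. j < m \<and> k < m \<and> j \<noteq> k \<and> p j = p k) \<or> has_orientation G acte \<rho> p m"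
proof (cases "\<exists>j k. j < m \<and> k < m \<and> j \<noteq> k \<and> p j = p k")
  case False
  then have distinct: "\<And>j k. j < m \<Longrightarrow> k < m \<Longrightarrow> p j = p k \<Longrightarrow> j = k" by blast
  have "m \<noteq> 1"
  proof
    assume "m = 1"
    then show False using closed_T_edge_path_adj[OF assms(6,7,5), of 0] by (simp add: T_adj_def)
  qed
  then have "2 \<le> m" using assms(5) by simp
  then obtain ori where "cyclic_orientation (\<lambda>k. translate G acte (p (k mod m)) \<rho>) m ori"
    using cyclic_orientation_of_closed_T_edge_path[OF assms(1,2,4,6,7) _ distinct] by blast
  then show ?thesis
    using has_orientation_if_cyclic_orientation assms(5,7) by blast
qed blast

end
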